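(* Let $q$ be a prime power and $\lambda\in(0,1)$ be such that $\lambda q$ is a positive integer. Then there exists a coded caching scheme with linear subpacketization $F=K$, where the number of users satisfies $K\le \frac{q^{2\lambda^2q^2}}{(\lambda q)!}$, with cache fraction $\frac{M}{N}\le\lambda$ and global caching gain $\gamma\ge\frac{4^{\lambda q}}{2\sqrt{\lambda q}}$ (the rate being $R=K(1-\frac{M}{N})/\gamma$).
   Context: Coded caching setup: a server holds $N$ files $W_1,\dots,W_N$ and is connected by an error-free broadcast link to $K$ users, each having a cache able to store $M$ files; it is assumed throughout that $N\ge K$. Each file is split into $F$ equal-size subfiles ($F$ is the subpacketization). Caching is done before demands are known and is symmetric: for every user and subfile index $f$, the user caches the $f$-th subfile of either all files or none. In the delivery phase every user demands one file and the server broadcasts transmissions, each of the size of one subfile, so that every user can recover its demanded file from its cache and the transmissions, for every demand vector. The rate $R$ is the number of transmissions divided by $F$, and the global caching gain is $\gamma=K(1-M/N)/R$. *)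

theory Defs
  imports Complex_Main "HOL-Number_Theory.Number_Theory"
begin

(* Files are indexed by 0..<N, users by 0..<K, subfile indices by 0..<F.
   A library is W :: nat => nat => 'v, W n f = f-th subfile of file n.
   Symmetric placement: user k caches subfile f of every file iff f \<in> Z k.
   A transmission is a function of the library with value of the size of one
   subfile (a 'v). *)

definition delivers ::
  "nat \<Rightarrow> nat \<Rightarrow> nat \<Rightarrow> (nat \<Rightarrow> nat set) \<Rightarrow> (nat \<Rightarrow> nat)
     \<Rightarrow> ((nat \<Rightarrow> nat \<Rightarrow> 'v) \<Rightarrow> 'v) list \<Rightarrow> bool" where
  "delivers N K F Z d tr \<longleftrightarrow>
     (\<forall>t\<in>set tr. \<forall>W W'. (\<forall>n<N. \<forall>f<F. W n f = W' n f) \<longrightarrow> t W = t W') \<and>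
     (\<forall>k<K. \<forall>W W'.
        (\<forall>n<N. \<forall>f\<in>Z k. W n f = W' n f) \<and> (\<forall>t\<in>set tr. t W = t W')
        \<longrightarrow> (\<forall>f<F. W (d k) f = W' (d k) f))"

(* A coded caching scheme with N files, K users, cache size M (in files),
   subpacketization F, placement Z, using at most T transmissions for every
   demand vector; rate R = T / F. *)
definition coded_caching_scheme ::
  "'v itself \<Rightarrow> nat \<Rightarrow> nat \<Rightarrow> real \<Rightarrow> nat \<Rightarrow> (nat \<Rightarrow> nat set) \<Rightarrow> nat \<Rightarrow> bool" where
  "coded_caching_scheme _ N K M F Z T \<longleftrightarrow>
     F > 0 \<and>
     (\<forall>k<K. Z k \<subseteq> {..<F} \<and> real N * real (card (Z k)) \<le> M * real F) \<and>
     (\<forall>d. (\<forall>k<K. d k < N) \<longrightarrow>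
        (\<exists>tr :: ((nat \<Rightarrow> nat \<Rightarrow> 'v) \<Rightarrow> 'v) list.
            length tr \<le> T \<and> delivers N K F Z d tr))"

end

theory Submission
  imports Defs "HOL-Library.FuncSet"
begin

(* Users are the vectors of [m]^n and user k caches subfile f iff the vectors k and f agree in
   some coordinate, a fraction 1 - (1 - 1/m)^n.  For every n-tuple P of 2-subsets of [m] the
   server sends the sum of W_(d k, f) over all pairs (k, f) with {k_i, f_i} = P_i for all i:
   a user k missing f finds its subfile in exactly one such sum, and every other summand in it
   is some f' sharing a coordinate with k, hence cached.  These (m choose 2)^n transmissions
   give caching gain 2^n; with m = 2q and n = 2 lambda q - 1 all bounds follow. *)

definition coded_sum :: "(nat \<Rightarrow> nat) \<Rightarrow> (nat \<times> nat) set \<Rightarrow> (nat \<Rightarrow> nat \<Rightarrow> 'v) \<Rightarrow> 'v::comm_monoid_add"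
  where "coded_sum d C W = (\<Sum>(k, f)\<in>C. W (d k) f)"

lemma sum_eq_imp_summand_eq:
  fixes g h :: "'a \<Rightarrow> 'b::ab_group_add"
  assumes "finite A" "x \<in> A" "sum g A = sum h A" "\<And>y. y \<in> A - {x} \<Longrightarrow> g y = h y"
  shows "g x = h x"
proof -
  have "g x + sum g (A - {x}) = h x + sum h (A - {x})"
    using assms(3) sum.remove[OF assms(1,2)] by metis
  moreover have "sum g (A - {x}) = sum h (A - {x})"
    using assms(4) by (rule sum.cong[OF refl])
  ultimately show ?thesis by simp
qed

lemma delivers_coded_sums:
  fixes C :: "'g \<Rightarrow> (nat \<times> nat) set"
  assumes demand: "\<forall>k<K. d k < N"
    and C_sub: "\<And>P. P \<in> set Ps \<Longrightarrow> C P \<subseteq> {..<K} \<times> {..<F}"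
    and covers: "\<And>k f. k < K \<Longrightarrow> f < F \<Longrightarrow> f \<notin> Z k \<Longrightarrow>
       \<exists>P\<in>set Ps. (k, f) \<in> C P \<and> (\<forall>(k', f')\<in>C P. (k', f') \<noteq> (k, f) \<longrightarrow> f' \<in> Z k)"
  shows "delivers N K F Z d (map (\<lambda>P. coded_sum d (C P) :: (nat \<Rightarrow> nat \<Rightarrow> 'v::ab_group_add) \<Rightarrow> 'v) Ps)"
  unfolding delivers_def
proof (intro conjI ballI allI impI)
  fix t :: "(nat \<Rightarrow> nat \<Rightarrow> 'v) \<Rightarrow> 'v" and W W' :: "nat \<Rightarrow> nat \<Rightarrow> 'v"
  assume "t \<in> set (map (\<lambda>P. coded_sum d (C P)) Ps)" and W: "\<forall>n<N. \<forall>f<F. W n f = W' n f"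
  then obtain P where P: "P \<in> set Ps" and t: "t = coded_sum d (C P)" by auto
  show "t W = t W'"
    unfolding t coded_sum_def using C_sub[OF P] W demand by (intro sum.cong) auto
next
  fix k f and W W' :: "nat \<Rightarrow> nat \<Rightarrow> 'v"
  assume k: "k < K" and f: "f < F"
    and W: "(\<forall>n<N. \<forall>f\<in>Z k. W n f = W' n f) \<and> (\<forall>t\<in>set (map (\<lambda>P. coded_sum d (C P)) Ps). t W = t W')"
  show "W (d k) f = W' (d k) f"
  proof (cases "f \<in> Z k")
    case True
    then show ?thesis using W demand k by auto
  next
    case False
    then obtain P where P: "P \<in> set Ps" and kf: "(k, f) \<in> C P"
      and others: "\<forall>(k', f')\<in>C P. (k', f') \<noteq> (k, f) \<longrightarrow> f' \<in> Z k"
      using covers k f by blast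
    define w where "w = (\<lambda>W :: nat \<Rightarrow> nat \<Rightarrow> 'v. \<lambda>(k', f'). W (d k') f')"
    have "finite (C P)" using C_sub[OF P] by (rule finite_subset) simp
    moreover have "sum (w W) (C P) = sum (w W') (C P)"
      using W P unfolding w_def coded_sum_def by auto
    moreover have "w W c = w W' c" if c: "c \<in> C P - {(k, f)}" for c
    proof -
      obtain k' f' where c_eq: "c = (k', f')" by fastforce
      have "f' \<in> Z k" using c others unfolding c_eq by auto
      moreover have "k' < K" using c C_sub[OF P] unfolding c_eq by auto
      ultimately show ?thesis unfolding c_eq w_def using W demand by simp
    qed
    ultimately have "w W (k, f) = w W' (k, f)"
      by (rule sum_eq_imp_summand_eq[OF _ kf])
    then show ?thesis unfolding w_def by simp
  qed
qed

locale coordinate_scheme =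
  fixes m n :: nat and e :: "nat \<Rightarrow> nat \<Rightarrow> nat"
  assumes m_pos: "0 < m"
    and e_bij: "bij_betw e {..<m^n} (\<Pi>\<^sub>E i\<in>{..<n}. {..<m})"
begin

definition cached :: "nat \<Rightarrow> nat set"
  where "cached k = {f. f < m^n \<and> (\<exists>i<n. e f i = e k i)}"

definition pair_class :: "(nat \<Rightarrow> nat set) \<Rightarrow> (nat \<times> nat) set"
  where "pair_class P = {(k, f). k < m^n \<and> f < m^n \<and> (\<forall>i<n. e k i \<noteq> e f i \<and> {e k i, e f i} = P i)}"

definition pair_tuples :: "(nat \<Rightarrow> nat set) set"
  where "pair_tuples = (\<Pi>\<^sub>E i\<in>{..<n}. {S. S \<subseteq> {..<m} \<and> card S = 2})"

lemma e_mem: "k < m^n \<Longrightarrow> e k \<in> (\<Pi>\<^sub>E i\<in>{..<n}. {..<m})"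
  using e_bij by (auto simp: bij_betw_def)

lemma eq_if_coords_eq:
  assumes "k < m^n" "f < m^n" "\<forall>i<n. e k i = e f i"
  shows "k = f"
proof -
  have "e k = e f"
    using assms e_mem[of k] e_mem[of f] by (intro ext) (metis PiE_arb lessThan_iff)
  then show ?thesis
    using assms(1,2) e_bij by (auto simp: bij_betw_def inj_on_def)
qed

lemma card_uncached:
  assumes k: "k < m^n"
  shows "card ({..<m^n} - cached k) = (m - 1)^n"
proof -
  have "e ` ({..<m^n} - cached k) = (\<Pi>\<^sub>E i\<in>{..<n}. {..<m} - {e k i})"
  proof
    show "e ` ({..<m^n} - cached k) \<subseteq> (\<Pi>\<^sub>E i\<in>{..<n}. {..<m} - {e k i})"
      using e_mem unfolding cached_def by (fastforce simp: PiE_iff)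
    show "(\<Pi>\<^sub>E i\<in>{..<n}. {..<m} - {e k i}) \<subseteq> e ` ({..<m^n} - cached k)"
    proof
      fix v assume v: "v \<in> (\<Pi>\<^sub>E i\<in>{..<n}. {..<m} - {e k i})"
      then have "v \<in> (\<Pi>\<^sub>E i\<in>{..<n}. {..<m})" by (auto simp: PiE_iff)
      then have "v \<in> e ` {..<m^n}" using e_bij by (simp add: bij_betw_def)
      then obtain f where "f < m^n" "v = e f" by blast
      then show "v \<in> e ` ({..<m^n} - cached k)" using v unfolding cached_def by (auto simp: PiE_iff)
    qed
  qed
  moreover have "inj_on e ({..<m^n} - cached k)"
    using e_bij by (auto simp: bij_betw_def intro: inj_on_subset)
  moreover have "card ({..<m} - {e k i}) = m - 1" if "i < n" for i
    using e_mem[OF k] that by (auto simp: PiE_iff)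
  ultimately show ?thesis by (simp add: card_image[symmetric] card_PiE)
qed

lemma card_cached:
  assumes "k < m^n"
  shows "card (cached k) = m^n - (m - 1)^n"
proof -
  have sub: "cached k \<subseteq> {..<m^n}" by (auto simp: cached_def)
  then have "card (cached k) \<le> m^n" by (metis card_mono card_lessThan finite_lessThan)
  moreover have "card ({..<m^n} - cached k) = m^n - card (cached k)"
    using sub by (simp add: card_Diff_subset finite_subset)
  ultimately show ?thesis using card_uncached[OF assms] by simp
qed

lemma pair_class_other_cached:
  assumes kf: "(k, f) \<in> pair_class P" and kf': "(k', f') \<in> pair_class P" and ne: "(k', f') \<noteq> (k, f)"
  shows "f' \<in> cached k"
proof (cases "\<forall>i<n. e k' i = e k i")
  case True
  have "\<forall>i<n. e f' i = e f i"
  proof (intro allI impI)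
    fix i assume "i < n"
    then have "{e k i, e f' i} = {e k i, e f i}" and "e k i \<noteq> e f' i"
      using True kf kf' unfolding pair_class_def by auto
    then show "e f' i = e f i" by (auto simp: doubleton_eq_iff)
  qed
  then have "k' = k \<and> f' = f"
    using True kf kf' eq_if_coords_eq unfolding pair_class_def by auto
  with ne show ?thesis by simp
next
  case False
  then obtain i where i: "i < n" "e k' i \<noteq> e k i" by blast
  moreover have "{e k' i, e f' i} = {e k i, e f i}"
    using i kf kf' unfolding pair_class_def by auto
  ultimately have "e f' i = e k i" by (auto simp: doubleton_eq_iff)
  with i kf' show ?thesis unfolding pair_class_def cached_def by auto
qed

lemma uncached_mem_pair_class:
  assumes k: "k < m^n" and f: "f < m^n" and "f \<notin> cached k"
  shows "(\<lambda>i\<in>{..<n}. {e k i, e f i}) \<in> pair_tuples"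
    and "(k, f) \<in> pair_class (\<lambda>i\<in>{..<n}. {e k i, e f i})"
proof -
  have "\<forall>i<n. e k i \<noteq> e f i" using assms unfolding cached_def by auto
  then show "(\<lambda>i\<in>{..<n}. {e k i, e f i}) \<in> pair_tuples"
    and "(k, f) \<in> pair_class (\<lambda>i\<in>{..<n}. {e k i, e f i})"
    using e_mem[OF k] e_mem[OF f] k f unfolding pair_tuples_def pair_class_def by (auto simp: PiE_iff)
qed

lemma card_pair_tuples: "card pair_tuples = (m choose 2)^n"
  using n_subsets[of "{..<m}" 2] by (simp add: pair_tuples_def card_PiE)

lemma finite_pair_tuples: "finite pair_tuples"
proof -
  have "finite {S. S \<subseteq> {..<m} \<and> card S = 2}"
    by (rule finite_subset[of _ "Pow {..<m}"]) auto
  then show ?thesis unfolding pair_tuples_def by (simp add: finite_PiE)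
qed

lemma coded_caching_scheme:
  "coded_caching_scheme TYPE('v::ab_group_add) N (m^n) ((1 - ((real m - 1) / real m)^n) * real N)
     (m^n) cached ((m choose 2)^n)"
  unfolding coded_caching_scheme_def
proof (intro conjI allI impI)
  show "0 < m^n" using m_pos by simp
next
  fix k assume k: "k < m^n"
  show "cached k \<subseteq> {..<m^n}" by (auto simp: cached_def)
  have "real (card (cached k)) = real m^n - (real m - 1)^n"
    using card_cached[OF k] m_pos by (simp add: of_nat_diff power_mono)
  also have "\<dots> = (1 - ((real m - 1) / real m)^n) * real (m^n)"
    using m_pos by (simp add: power_divide field_simps)
  finally show "real N * real (card (cached k)) \<le> (1 - ((real m - 1) / real m)^n) * real N * real (m^n)"
    by simp
next
  fix d assume d: "\<forall>k<m^n. d k < N"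
  obtain Ps where Ps: "set Ps = pair_tuples" "distinct Ps"
    using finite_distinct_list[OF finite_pair_tuples] by blast
  let ?tr = "map (\<lambda>P. coded_sum d (pair_class P) :: (nat \<Rightarrow> nat \<Rightarrow> 'v) \<Rightarrow> 'v) Ps"
  have "length ?tr \<le> (m choose 2)^n"
    using Ps card_pair_tuples distinct_card by fastforce
  moreover have "delivers N (m^n) (m^n) cached d ?tr"
  proof (rule delivers_coded_sums[OF d])
    show "pair_class P \<subseteq> {..<m^n} \<times> {..<m^n}" for P
      by (auto simp: pair_class_def)
    show "\<exists>P\<in>set Ps. (k, f) \<in> pair_class P \<and>
        (\<forall>(k', f')\<in>pair_class P. (k', f') \<noteq> (k, f) \<longrightarrow> f' \<in> cached k)"
      if "k < m^n" "f < m^n" "f \<notin> cached k" for k f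
    proof (intro bexI conjI)
      let ?P = "\<lambda>i\<in>{..<n}. {e k i, e f i}"
      show "?P \<in> set Ps" using uncached_mem_pair_class(1)[OF that] Ps(1) by simp
      show kf: "(k, f) \<in> pair_class ?P" using uncached_mem_pair_class(2)[OF that] .
      show "\<forall>(k', f')\<in>pair_class ?P. (k', f') \<noteq> (k, f) \<longrightarrow> f' \<in> cached k"
        using pair_class_other_cached[OF kf] by blast
    qed
  qed
  ultimately show "\<exists>tr :: ((nat \<Rightarrow> nat \<Rightarrow> 'v) \<Rightarrow> 'v) list. length tr \<le> (m choose 2)^n \<and>
      delivers N (m^n) (m^n) cached d tr"
    by (intro exI[of _ ?tr] conjI)
qed

end

lemma exists_coordinate_scheme:
  assumes "0 < m"
  shows "\<exists>Z. \<forall>N. coded_caching_scheme TYPE('v::ab_group_add) N (m^n)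
    ((1 - ((real m - 1) / real m)^n) * real N) (m^n) Z ((m choose 2)^n)"
proof -
  have "finite (\<Pi>\<^sub>E i\<in>{..<n}. {..<m})" and "card (\<Pi>\<^sub>E i\<in>{..<n}. {..<m}) = m^n"
    by (simp_all add: finite_PiE card_PiE)
  then obtain e where "bij_betw e {..<m^n} (\<Pi>\<^sub>E i\<in>{..<n}. {..<m})"
    using ex_bij_betw_nat_finite by (metis atLeast0LessThan)
  then interpret coordinate_scheme m n e
    using assms by unfold_locales
  show ?thesis using coded_caching_scheme by blast
qed

lemma real_choose_two: "real (m choose 2) = real m * (real m - 1) / 2"
proof -
  have "even (m * (m - 1))" by (cases "even m") auto
  then have "2 * (m choose 2) = m * (m - 1)"
    by (simp add: choose_two)
  then show ?thesis
    by (cases m) (simp_all add: field_simps flip: of_nat_mult)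
qed

lemma coordinate_scheme_gain:
  assumes "2 \<le> m"
  shows "real (m^n) * (1 - (1 - ((real m - 1) / real m)^n)) / (real ((m choose 2)^n) / real (m^n)) = 2^n"
proof -
  have "real ((m choose 2)^n) = real m^n * (real m - 1)^n / 2^n"
    by (simp add: real_choose_two power_divide power_mult_distrib)
  moreover have "real m - 1 > 0" using assms by simp
  ultimately show ?thesis
    by (simp add: power_divide field_simps)
qed

lemma one_minus_power_one_minus_le: "(x::real) \<le> 1 \<Longrightarrow> 1 - (1 - x)^n \<le> real n * x"
  using Bernoulli_inequality[of "- x" n] by simp

lemma coordinate_scheme_fraction_bounds:
  assumes "0 < m"
  shows "0 \<le> 1 - ((real m - 1) / real m)^n" and "1 - ((real m - 1) / real m)^n \<le> real n / real m"
proof -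
  have ratio: "(real m - 1) / real m = 1 - 1 / real m"
    using assms by (simp add: field_simps)
  show "0 \<le> 1 - ((real m - 1) / real m)^n"
    unfolding ratio using assms by (simp add: power_le_one)
  show "1 - ((real m - 1) / real m)^n \<le> real n / real m"
    unfolding ratio using one_minus_power_one_minus_le[of "1 / real m" n] assms by simp
qed

lemma fact_le_power_pred: "a \<le> q \<Longrightarrow> fact a \<le> q^(a - 1)"
proof (induction a)
  case 0
  then show ?case by simp
next
  case (Suc a)
  show ?case
  proof (cases "a = 0")
    case True
    then show ?thesis by simp
  next
    case False
    have "fact (Suc a) = Suc a * fact a" by simp
    also have "\<dots> \<le> q * q^(a - 1)" using Suc by (intro mult_mono) auto
    also have "\<dots> = q^(Suc a - 1)" using False by (cases a) auto
    finally show ?thesis .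
  qed
qed

lemma two_mul_power_le_powr_div_fact:
  fixes a q :: nat
  assumes "0 < a" "a \<le> q" "2 \<le> q"
  shows "real ((2 * q)^(2 * a - 1)) \<le> real q powr (2 * real a^2) / fact a"
proof -
  have "(2 * q)^(2 * a - 1) \<le> (q^2)^(2 * a - 1)"
    using assms(3) by (intro power_mono) (auto simp: power2_eq_square)
  moreover have "fact a \<le> q^(a - 1)" using fact_le_power_pred[OF assms(2)] .
  ultimately have "(2 * q)^(2 * a - 1) * fact a \<le> q^(2 * (2 * a - 1) + (a - 1))"
    by (simp add: mult_mono power_mult power_add)
  also have "\<dots> \<le> q^(2 * a^2)"
  proof (rule power_increasing)
    show "2 * (2 * a - 1) + (a - 1) \<le> 2 * a^2"
      using assms(1) by (cases a) (auto simp: power2_eq_square algebra_simps)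
  qed (use assms(3) in simp)
  finally have "real ((2 * q)^(2 * a - 1)) * fact a \<le> real q ^ (2 * a^2)"
    by (metis of_nat_fact of_nat_le_iff of_nat_mult of_nat_power)
  moreover have "real q powr (2 * real a^2) = real q ^ (2 * a^2)"
    using assms(3) powr_realpow[of "real q" "2 * a^2"] by simp
  ultimately show ?thesis by (simp add: le_divide_eq)
qed

lemma four_powr_div_sqrt_le:
  fixes a :: nat
  assumes "0 < a"
  shows "4 powr real a / (2 * sqrt (real a)) \<le> 2^(2 * a - 1)"
proof -
  have "4 powr real a = 2 * 2^(2 * a - 1)"
    using assms by (simp add: powr_realpow power_mult flip: power_Suc)
  moreover have "1 \<le> sqrt (real a)" using assms by simp
  ultimately show ?thesis
    by (simp add: divide_le_eq mult_le_cancel_left1)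
qed

theorem corollary2:
  fixes q a :: nat and lam :: real
  assumes "primepow q"
    and "0 < lam" and "lam < 1"
    and "lam * real q = real a" and "a > 0"
  shows "\<exists>K Z T \<mu>.
     1 \<le> K \<and>
     real K \<le> real q powr (2 * lam^2 * (real q)^2) / fact a \<and>
     0 \<le> \<mu> \<and> \<mu> \<le> lam \<and>
     (\<forall>N\<ge>K. coded_caching_scheme TYPE('v::ab_group_add) N K (\<mu> * real N) K Z T) \<and>
     real K * (1 - \<mu>) / (real T / real K) \<ge> 4 powr (lam * real q) / (2 * sqrt (lam * real q))"
proof -
  have q: "2 \<le> q" using assms(1) primepow_gt_Suc_0 by fastforce
  have lam: "lam = real a / real q" using assms(4) q by (simp add: field_simps)
  have "a \<le> q" using assms(3,4) q by (simp add: lam field_simps)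
  have exponent: "2 * lam^2 * real q^2 = 2 * real a^2"
    using assms(4) by (simp flip: power_mult_distrib)
  define K where "K = (2 * q)^(2 * a - 1)"
  define T where "T = (2 * q choose 2)^(2 * a - 1)"
  define \<mu> where "\<mu> = 1 - ((real (2 * q) - 1) / real (2 * q))^(2 * a - 1)"
  obtain Z where "\<forall>N. coded_caching_scheme TYPE('v) N K (\<mu> * real N) K Z T"
    using exists_coordinate_scheme[of "2 * q" "2 * a - 1"] q unfolding K_def T_def \<mu>_def by auto
  moreover have "1 \<le> K" using q by (simp add: K_def)
  moreover have "0 \<le> \<mu>" and "\<mu> \<le> real (2 * a - 1) / real (2 * q)"
    using coordinate_scheme_fraction_bounds[of "2 * q" "2 * a - 1"] q unfolding \<mu>_def by simp_all
  moreover have "real (2 * a - 1) / real (2 * q) \<le> lam"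
    unfolding lam using assms(5) q by (simp add: of_nat_diff divide_simps)
  moreover have "real K \<le> real q powr (2 * lam^2 * real q^2) / fact a"
    using two_mul_power_le_powr_div_fact[OF assms(5) \<open>a \<le> q\<close> q] unfolding K_def exponent .
  moreover have "4 powr (lam * real q) / (2 * sqrt (lam * real q)) \<le> real K * (1 - \<mu>) / (real T / real K)"
    using four_powr_div_sqrt_le[OF assms(5)] coordinate_scheme_gain[of "2 * q" "2 * a - 1"] q
    unfolding assms(4) K_def T_def \<mu>_def by simp
  ultimately show ?thesis by (meson order_trans)
qed

end
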